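(* Let $s,k$ be integers such that $s$ is prime and $2 \le k \le s$. Then \[ A(sk, 2k-2, k) ~\ge~ s^2 + k\cdot A(s, 2k-2, k). \]
   Context: $A(n,d,w)$ denotes the maximum number of binary words of length $n$ and Hamming weight $w$ that are pairwise at Hamming distance at least $d$; equivalently $A(n,2k-2,k)$ is the maximum number of pairwise edge-disjoint copies of $K_k$ in the complete graph $K_n$. *)

theory Defs
  imports Main "HOL-Computational_Algebra.Primes"
begin

text \<open>A binary word of length n is identified with its support, a subset of {..<n};
  its Hamming weight is the cardinality of the support, and the Hamming distance
  of two words is the cardinality of the symmetric difference of their supports.\<close>

definition hamming_dist :: "nat set \<Rightarrow> nat set \<Rightarrow> nat" where
  "hamming_dist x y = card ((x - y) \<union> (y - x))"

definition cw_code :: "nat \<Rightarrow> nat \<Rightarrow> nat \<Rightarrow> nat set set \<Rightarrow> bool" where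
  "cw_code n d w C \<longleftrightarrow>
     (\<forall>x\<in>C. x \<subseteq> {..<n} \<and> card x = w) \<and>
     (\<forall>x\<in>C. \<forall>y\<in>C. x \<noteq> y \<longrightarrow> d \<le> hamming_dist x y)"

definition A :: "nat \<Rightarrow> nat \<Rightarrow> nat \<Rightarrow> nat" where
  "A n d w = Max (card ` {C. cw_code n d w C})"

end

theory Submission
  imports Defs
begin

text \<open>For weight-k words, distance at least 2k - 2 means that two supports share at most
  one point. Identify {..<s*k} with the grid {..<k} \<times> \<int>/s via i*s + x. Since s is prime,
  the graphs of the s^2 affine maps i \<mapsto> a*i + b (mod s), restricted to the k \<le> s rows, pairwise
  meet in at most one point, and each meets every row exactly once. So placing a copy of an
  optimal (s, 2k - 2, k) code in each of the k rows keeps all pairwise intersections at most one,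
  giving s^2 + k * A(s, 2k - 2, k) codewords.\<close>

definition clique_packing :: "nat \<Rightarrow> nat \<Rightarrow> nat set set \<Rightarrow> bool" where
  "clique_packing n k F \<longleftrightarrow>
     (\<forall>x\<in>F. x \<subseteq> {..<n} \<and> card x = k) \<and>
     (\<forall>x\<in>F. \<forall>y\<in>F. x \<noteq> y \<longrightarrow> card (x \<inter> y) \<le> 1)"

lemma finite_cw_codes: "finite {C. cw_code n d w C}"
proof (rule finite_subset)
  show "{C. cw_code n d w C} \<subseteq> Pow (Pow {..<n})"
    unfolding cw_code_def by auto
qed simp

lemma card_le_A: "cw_code n d w C \<Longrightarrow> card C \<le> A n d w"
  unfolding A_def using finite_cw_codes by (intro Max_ge) auto

lemma A_attained: "\<exists>C. cw_code n d w C \<and> card C = A n d w"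
proof -
  have "cw_code n d w {}" unfolding cw_code_def by simp
  then have "A n d w \<in> card ` {C. cw_code n d w C}"
    unfolding A_def using finite_cw_codes by (intro Max_in) auto
  then show ?thesis by auto
qed

lemma hamming_dist_eq_card_Int:
  assumes "finite x" "finite y" "card x = k" "card y = k"
  shows "hamming_dist x y = 2 * (k - card (x \<inter> y))"
proof -
  have "card (x - y) = k - card (x \<inter> y)" "card (y - x) = k - card (x \<inter> y)"
    using assms by (simp_all add: card_Diff_subset_Int Int_commute)
  then show ?thesis
    unfolding hamming_dist_def using assms by (subst card_Un_disjoint) auto
qed

lemma cw_code_iff_clique_packing:
  "cw_code n (2 * k - 2) k C \<longleftrightarrow> clique_packing n k C"
proof -
  have "2 * k - 2 \<le> hamming_dist x y \<longleftrightarrow> card (x \<inter> y) \<le> 1"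
    if "x \<subseteq> {..<n}" "y \<subseteq> {..<n}" "card x = k" "card y = k" for x y
  proof -
    have "finite x" "finite y" using that finite_subset by blast+
    moreover have "card (x \<inter> y) \<le> k"
      using \<open>finite x\<close> \<open>card x = k\<close> by (metis card_mono Int_lower1)
    ultimately show ?thesis using hamming_dist_eq_card_Int[of x y k] that by auto
  qed
  then show ?thesis unfolding cw_code_def clique_packing_def by blast
qed

lemma finite_clique_packing: "clique_packing n k F \<Longrightarrow> finite F"
  unfolding clique_packing_def by (rule finite_subset[of _ "Pow {..<n}"]) auto

lemma clique_packing_Un:
  assumes "clique_packing n k F" "clique_packing n k G"
    and "\<And>x y. x \<in> F \<Longrightarrow> y \<in> G \<Longrightarrow> card (x \<inter> y) \<le> 1"
  shows "clique_packing n k (F \<union> G)"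
  using assms unfolding clique_packing_def by (metis Int_commute Un_iff)

lemma affine_mod_prime_eqI:
  fixes p a b a' b' i j :: nat
  assumes "prime p" and "a < p" "a' < p" "b < p" "b' < p" "i < p" "j < p" "i \<noteq> j"
    and "(a * i + b) mod p = (a' * i + b') mod p" "(a * j + b) mod p = (a' * j + b') mod p"
  shows "a = a' \<and> b = b'"
proof -
  have eq_if_dvd: "x = y" if "x < p" "y < p" "int p dvd int x - int y" for x y
    using that by (metis mod_eq_dvd_iff mod_less of_nat_eq_iff zmod_int)
  have dvd_i: "int p dvd (int a * int i + int b) - (int a' * int i + int b')"
    and dvd_j: "int p dvd (int a * int j + int b) - (int a' * int j + int b')"
    using assms(9,10) by (metis mod_eq_dvd_iff of_nat_add of_nat_mult zmod_int)+
  have "(int a * int i + int b) - (int a' * int i + int b')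
        - ((int a * int j + int b) - (int a' * int j + int b'))
        = (int a - int a') * (int i - int j)"
    by (simp add: algebra_simps)
  then have "int p dvd (int a - int a') * (int i - int j)"
    using dvd_diff[OF dvd_i dvd_j] by simp
  then have "int p dvd int a - int a' \<or> int p dvd int i - int j"
    using \<open>prime p\<close> by (simp add: prime_dvd_mult_iff)
  then have "a = a'" using eq_if_dvd assms by blast
  moreover from this have "b = b'" using eq_if_dvd dvd_i assms by simp
  ultimately show ?thesis ..
qed

lemma grid_div [simp]: "x < s \<Longrightarrow> (i * s + x) div s = (i::nat)"
  and grid_mod [simp]: "x < s \<Longrightarrow> (i * s + x) mod s = x"
  by auto

lemma grid_less: "i < k \<Longrightarrow> x < s \<Longrightarrow> i * s + x < s * (k::nat)"
proof -
  assume "i < k" "x < s"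
  then have "i * s + x < Suc i * s" by simp
  also have "\<dots> \<le> s * k" using \<open>i < k\<close> by (metis Suc_leI mult.commute mult_le_mono1)
  finally show ?thesis .
qed

definition line :: "nat \<Rightarrow> nat \<Rightarrow> nat \<Rightarrow> nat \<Rightarrow> nat set" where
  "line s k a b = (\<lambda>i. i * s + (a * i + b) mod s) ` {..<k}"

definition lines :: "nat \<Rightarrow> nat \<Rightarrow> nat set set" where
  "lines s k = (\<lambda>(a, b). line s k a b) ` ({..<s} \<times> {..<s})"

lemma line_subset: "0 < s \<Longrightarrow> line s k a b \<subseteq> {..<s * k}"
  unfolding line_def using grid_less by auto

lemma card_line:
  assumes "0 < s"
  shows "card (line s k a b) = k"
proof -
  have "inj_on (\<lambda>i. i * s + (a * i + b) mod s) {..<k}"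
  proof (rule inj_onI)
    fix i j assume "i * s + (a * i + b) mod s = j * s + (a * j + b) mod s"
    then have "(i * s + (a * i + b) mod s) div s = (j * s + (a * j + b) mod s) div s" by simp
    then show "i = j" using assms by simp
  qed
  then show ?thesis unfolding line_def by (simp add: card_image)
qed

lemma line_Int_row:
  assumes "c \<subseteq> {..<s}"
  shows "line s k a b \<inter> (+) (i * s) ` c \<subseteq> {i * s + (a * i + b) mod s}"
proof
  fix p assume "p \<in> line s k a b \<inter> (+) (i * s) ` c"
  then obtain j x where "p = j * s + (a * j + b) mod s" "x \<in> c" "p = i * s + x"
    unfolding line_def by blast
  moreover from this have "x < s" using assms by auto
  moreover from calculation have "j = i"
    by (metis grid_div mod_less_divisor gr_zeroI less_nat_zero_code)
  ultimately show "p \<in> {i * s + (a * i + b) mod s}" by simp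
qed

lemma mem_line_Int_line:
  assumes "0 < s" "p \<in> line s k a b \<inter> line s k a' b'"
  obtains i where "i < k" "p = i * s + (a * i + b) mod s" "(a * i + b) mod s = (a' * i + b') mod s"
proof -
  obtain i i' where i: "i < k" "p = i * s + (a * i + b) mod s" "p = i' * s + (a' * i' + b') mod s"
    using assms(2) unfolding line_def by blast
  have "p div s = i" "p mod s = (a * i + b) mod s" using i(2) assms(1) by simp_all
  moreover have "p div s = i'" "p mod s = (a' * i' + b') mod s" using i(3) assms(1) by simp_all
  ultimately show thesis using that i by metis
qed

lemma card_line_Int_line:
  assumes "prime s" "k \<le> s" "a < s" "b < s" "a' < s" "b' < s" "(a, b) \<noteq> (a', b')"
  shows "card (line s k a b \<inter> line s k a' b') \<le> 1"
proof (rule card_le_Suc0_iff_eq[THEN iffD2, unfolded One_nat_def[symmetric]])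
  have "0 < s" using \<open>prime s\<close> prime_gt_0_nat by blast
  show "\<forall>p\<in>line s k a b \<inter> line s k a' b'. \<forall>q\<in>line s k a b \<inter> line s k a' b'. p = q"
  proof (intro ballI)
    fix p q assume p: "p \<in> line s k a b \<inter> line s k a' b'" and q: "q \<in> line s k a b \<inter> line s k a' b'"
    obtain i where i: "i < k" "p = i * s + (a * i + b) mod s" "(a * i + b) mod s = (a' * i + b') mod s"
      using mem_line_Int_line[OF \<open>0 < s\<close> p] .
    obtain j where j: "j < k" "q = j * s + (a * j + b) mod s" "(a * j + b) mod s = (a' * j + b') mod s"
      using mem_line_Int_line[OF \<open>0 < s\<close> q] .
    have "i = j"
      using affine_mod_prime_eqI[of s a a' b b' i j] assms i j by fastforce
    then show "p = q" using i j by simp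
  qed
qed (simp add: line_def)

lemma clique_packing_lines:
  assumes "prime s" "k \<le> s"
  shows "clique_packing (s * k) k (lines s k)"
  unfolding clique_packing_def
proof (intro conjI ballI impI)
  have "0 < s" using \<open>prime s\<close> prime_gt_0_nat by blast
  fix x assume "x \<in> lines s k"
  then obtain a b where "x = line s k a b" unfolding lines_def by auto
  then show "x \<subseteq> {..<s * k}" and "card x = k"
    using line_subset card_line \<open>0 < s\<close> by simp_all
next
  fix x y assume "x \<in> lines s k" "y \<in> lines s k" "x \<noteq> y"
  then obtain a b a' b' where "x = line s k a b" "y = line s k a' b'"
    "a < s" "b < s" "a' < s" "b' < s" "(a, b) \<noteq> (a', b')"
    unfolding lines_def by auto
  then show "card (x \<inter> y) \<le> 1" using card_line_Int_line assms by simp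
qed

lemma card_lines:
  assumes "prime s" "2 \<le> k" "k \<le> s"
  shows "card (lines s k) = s ^ 2"
proof -
  have "inj_on (\<lambda>(a, b). line s k a b) ({..<s} \<times> {..<s})"
  proof (rule inj_onI, rule ccontr)
    fix ab ab' assume "ab \<in> {..<s} \<times> {..<s}" "ab' \<in> {..<s} \<times> {..<s}" "ab \<noteq> ab'"
      and eq: "(\<lambda>(a, b). line s k a b) ab = (\<lambda>(a, b). line s k a b) ab'"
    then obtain a b a' b' where "ab = (a, b)" "ab' = (a', b')" "a < s" "b < s" "a' < s" "b' < s"
      "line s k a b = line s k a' b'" "(a, b) \<noteq> (a', b')"
      by auto
    then have "card (line s k a b) \<le> 1" using card_line_Int_line[OF assms(1,3), of a b a' b'] by simp
    then show False
      using card_line prime_gt_0_nat[OF \<open>prime s\<close>] \<open>2 \<le> k\<close> by simp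
  qed
  then show ?thesis
    unfolding lines_def by (simp add: card_image power2_eq_square)
qed

definition row_copies :: "nat \<Rightarrow> nat \<Rightarrow> nat set set \<Rightarrow> nat set set" where
  "row_copies s k C = (\<lambda>(i, c). (+) (i * s) ` c) ` ({..<k} \<times> C)"

lemma row_copy_div:
  fixes s i p :: nat
  assumes "c \<subseteq> {..<s}" "p \<in> (+) (i * s) ` c"
  shows "p div s = i"
proof -
  obtain x where "x \<in> c" and p: "p = i * s + x" using assms(2) by blast
  then have "x < s" using assms(1) by blast
  then show ?thesis unfolding p by (rule grid_div)
qed

lemma card_line_Int_row_copy:
  assumes "c \<subseteq> {..<s}"
  shows "card (line s k a b \<inter> (+) (i * s) ` c) \<le> 1"
proof -
  have "card (line s k a b \<inter> (+) (i * s) ` c) \<le> card {i * s + (a * i + b) mod s}"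
    using line_Int_row[OF assms] by (rule card_mono[rotated]) simp
  then show ?thesis by simp
qed

lemma clique_packing_row_copies:
  assumes "clique_packing s k C"
  shows "clique_packing (s * k) k (row_copies s k C)"
  unfolding clique_packing_def
proof (intro conjI ballI impI)
  fix x assume "x \<in> row_copies s k C"
  then obtain i c where "i < k" "c \<in> C" and x: "x = (+) (i * s) ` c"
    unfolding row_copies_def by auto
  then have c: "c \<subseteq> {..<s}" "card c = k"
    using assms unfolding clique_packing_def by auto
  show "x \<subseteq> {..<s * k}"
  proof
    fix p assume "p \<in> x"
    then obtain y where "y \<in> c" "p = i * s + y" unfolding x by blast
    then show "p \<in> {..<s * k}" using grid_less[OF \<open>i < k\<close>, of y s] c(1) by auto
  qed
  show "card x = k" unfolding x using c(2) by (simp add: card_image)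
next
  fix x y assume "x \<in> row_copies s k C" "y \<in> row_copies s k C" "x \<noteq> y"
  obtain i c where x: "x = (+) (i * s) ` c" and "c \<in> C"
    using \<open>x \<in> row_copies s k C\<close> unfolding row_copies_def by auto
  obtain j c' where y: "y = (+) (j * s) ` c'" and "c' \<in> C"
    using \<open>y \<in> row_copies s k C\<close> unfolding row_copies_def by auto
  show "card (x \<inter> y) \<le> 1"
  proof (cases "i = j")
    case True
    then have "x \<inter> y = (+) (i * s) ` (c \<inter> c')"
      unfolding x y by (simp add: image_Int)
    moreover have "c \<noteq> c'" using x y True \<open>x \<noteq> y\<close> by blast
    ultimately show ?thesis
      using assms \<open>c \<in> C\<close> \<open>c' \<in> C\<close> unfolding clique_packing_def by (simp add: card_image)
  next
    case False
    have "c \<subseteq> {..<s}" "c' \<subseteq> {..<s}"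
      using assms \<open>c \<in> C\<close> \<open>c' \<in> C\<close> unfolding clique_packing_def by auto
    then have "p div s = i" "p div s = j" if "p \<in> x \<inter> y" for p
      using that unfolding x y by (auto intro: row_copy_div)
    then have "x \<inter> y = {}" using False by blast
    then show ?thesis by simp
  qed
qed

lemma card_row_copies:
  assumes "clique_packing s k C" "0 < k"
  shows "card (row_copies s k C) = k * card C"
proof -
  have "inj_on (\<lambda>(i, c). (+) (i * s) ` c) ({..<k} \<times> C)"
  proof (rule inj_onI, clarify)
    fix i c j c' assume "c \<in> C" "c' \<in> C" and eq: "(+) (i * s) ` c = (+) (j * s) ` c'"
    then have c: "c \<subseteq> {..<s}" "c' \<subseteq> {..<s}" "c \<noteq> {}"
      using assms unfolding clique_packing_def by auto
    then obtain x where "x \<in> c" by blast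
    then have "i * s + x \<in> (+) (j * s) ` c'" using eq by blast
    then have "(i * s + x) div s = j" by (rule row_copy_div[OF c(2)])
    moreover have "(i * s + x) div s = i" using c(1) \<open>x \<in> c\<close> grid_div by blast
    ultimately have "i = j" by simp
    with eq show "i = j \<and> c = c'" by (simp add: inj_image_eq_iff)
  qed
  moreover have "finite C" using assms(1) finite_clique_packing by blast
  ultimately show ?thesis
    unfolding row_copies_def by (simp add: card_image card_cartesian_product)
qed

lemma lines_Int_row_copies:
  assumes "clique_packing s k C" "2 \<le> k"
  shows "lines s k \<inter> row_copies s k C = {}"
proof (rule ccontr)
  assume "lines s k \<inter> row_copies s k C \<noteq> {}"
  then obtain a b i c where "b < s" "c \<in> C" and eq: "line s k a b = (+) (i * s) ` c"
    unfolding lines_def row_copies_def by auto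
  then have c: "c \<subseteq> {..<s}" using assms(1) unfolding clique_packing_def by auto
  have "j = i" if "j < k" for j
  proof -
    have "j * s + (a * j + b) mod s \<in> (+) (i * s) ` c"
      using eq that unfolding line_def by blast
    then have "(j * s + (a * j + b) mod s) div s = i" by (rule row_copy_div[OF c])
    moreover have "0 < s" using \<open>b < s\<close> by simp
    ultimately show ?thesis by simp
  qed
  then have "0 = i" "1 = i" using \<open>2 \<le> k\<close> by auto
  then show False by simp
qed

theorem lemma2:
  fixes s k :: nat
  assumes "prime s" and "2 \<le> k" and "k \<le> s"
  shows "A (s * k) (2 * k - 2) k \<ge> s ^ 2 + k * A s (2 * k - 2) k"
proof -
  obtain C where C: "clique_packing s k C" and card_C: "card C = A s (2 * k - 2) k"
    using A_attained cw_code_iff_clique_packing by blast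
  define F where "F = lines s k \<union> row_copies s k C"
  have "clique_packing (s * k) k F"
    unfolding F_def
  proof (rule clique_packing_Un)
    show "clique_packing (s * k) k (lines s k)"
      using clique_packing_lines assms by blast
    show "clique_packing (s * k) k (row_copies s k C)"
      using clique_packing_row_copies C by blast
    show "card (x \<inter> y) \<le> 1" if "x \<in> lines s k" "y \<in> row_copies s k C" for x y
      using that C card_line_Int_row_copy unfolding lines_def row_copies_def clique_packing_def
      by auto
  qed
  moreover have "card F = s ^ 2 + k * card C"
    unfolding F_def using assms C
    by (subst card_Un_disjoint)
      (auto intro: finite_clique_packing clique_packing_lines clique_packing_row_copies
        simp: lines_Int_row_copies card_lines card_row_copies)
  ultimately show ?thesis
    using card_le_A cw_code_iff_clique_packing card_C by metis
qed

end
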